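(* Let $D$ be a derivation acting on monomials $x^\lambda y^\mu$ ($\lambda,\mu\in\mathbb C$) in two indeterminates $x,y$ and their linear combinations, satisfying Leibniz's rule and $D(x^\lambda y^\mu)=x^\lambda y^\mu\bigl(\lambda x^{-1}Dx+\mu y^{-1}Dy\bigr)$. Suppose $Dx=x^{1+\alpha}y^{\alpha'}$ and $Dy=x^{\alpha+\beta}y^{1+\alpha'+\beta'}$. Then for all $n\ge0$ and all $\gamma,\gamma'\in\mathbb C$, $$D^n\bigl(x^\gamma y^{\gamma'}\bigr)=x^\gamma y^{\gamma'}\,\bigl(x^\alpha y^{\alpha'}\bigr)^n\sum_{k=0}^n\left[\begin{array}{cc|c}\alpha,&\beta&\gamma\\ \alpha',&\beta'&\gamma'\end{array}\right]_{n,k}\bigl(x^\beta y^{\beta'}\bigr)^k,$$ i.e. $D^n(x^\gamma y^{\gamma'})=x^\gamma y^{\gamma'}(x^\alpha y^{\alpha'})^nG_n(x^\beta y^{\beta'})$ where $G_n$ is the $n$th row polynomial of this GKP triangle.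
   Context: GKP triangle: for complex parameters $\alpha,\beta,\gamma,\alpha',\beta',\gamma'$, the array $T_{n,k}=\left[\begin{array}{cc|c}\alpha,&\beta&\gamma\\ \alpha',&\beta'&\gamma'\end{array}\right]_{n,k}$ is defined by $T_{0,0}=1$, $T_{n,k}=0$ if $n<0$, $k<0$ or $k>n$, and $T_{n+1,k+1}=[\alpha n+\beta(k+1)+\gamma]T_{n,k+1}+[\alpha' n+\beta' k+\gamma']T_{n,k}$ for $n\ge0$, $k\in\mathbb Z$; its $n$th row polynomial is $G_n(t)=\sum_{k=0}^nT_{n,k}t^k$. *)

theory Defs
  imports Complex_Main "HOL-Library.Poly_Mapping" "HOL-Library.Product_Plus"
begin

text \<open>Generalized Laurent polynomials in two indeterminates x, y with complex exponents:
  finitely supported linear combinations of monomials x^l y^m (l, m complex), with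
  multiplication given by adding exponents (the group algebra of C x C over C).\<close>

type_synonym gpoly = "(complex \<times> complex) \<Rightarrow>\<^sub>0 complex"

definition xy :: "complex \<Rightarrow> complex \<Rightarrow> gpoly" where
  "xy l m = Poly_Mapping.single (l, m) 1"

definition cst :: "complex \<Rightarrow> gpoly" where
  "cst c = Poly_Mapping.single (0, 0) c"

text \<open>GKP triangle T_{n,k}; entries with k > n are 0 automatically, negative k excluded by nat.\<close>

fun gkp :: "complex \<Rightarrow> complex \<Rightarrow> complex \<Rightarrow> complex \<Rightarrow> complex \<Rightarrow> complex \<Rightarrow> nat \<Rightarrow> nat \<Rightarrow> complex" where
  "gkp a b c a' b' c' 0 k = (if k = 0 then 1 else 0)"
| "gkp a b c a' b' c' (Suc n) 0 = (a * of_nat n + c) * gkp a b c a' b' c' n 0"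
| "gkp a b c a' b' c' (Suc n) (Suc k) =
     (a * of_nat n + b * of_nat (Suc k) + c) * gkp a b c a' b' c' n (Suc k)
   + (a' * of_nat n + b' * of_nat k + c') * gkp a b c a' b' c' n k"

end

theory Submission
  imports Defs
begin

text \<open>On a monomial the hypotheses give
  D(c x^a y^b) = c a x^(a+\<alpha>) y^(b+\<alpha>') + c b x^(a+\<alpha>+\<beta>) y^(b+\<alpha>'+\<beta>'),
  so D sends the monomial with exponent (\<gamma>, \<gamma>') + n(\<alpha>, \<alpha>') + k(\<beta>, \<beta>') to the two
  monomials of step n + 1 with indices k and k + 1, weighted by exactly the two coefficients
  of the GKP recurrence. Applying D to the n-th row sum therefore yields the (n+1)-st, and
  induction on n finishes.\<close>

lemma xy_mult: "xy a b * xy a' b' = xy (a + a') (b + b')"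
  by (simp add: xy_def mult_single)

lemma xy_0_0: "xy 0 0 = 1"
  by (simp add: xy_def flip: zero_prod_def)

lemma xy_power: "xy a b ^ n = xy (of_nat n * a) (of_nat n * b)"
  by (induction n) (simp_all add: xy_0_0 xy_mult algebra_simps)

lemma cst_mult_xy: "cst c * xy a b = Poly_Mapping.single (a, b) c"
  by (simp add: cst_def xy_def mult_single)

lemma gkp_eq_0_above_diagonal: "n < k \<Longrightarrow> gkp a b c a' b' c' n k = 0"
proof (induction n arbitrary: k)
  case (Suc n)
  then obtain j where "k = Suc j" "n < j" by (cases k) auto
  with Suc.IH show ?case by simp
qed simp

definition gkp_row_poly ::
    "complex \<Rightarrow> complex \<Rightarrow> complex \<Rightarrow> complex \<Rightarrow> complex \<Rightarrow> complex \<Rightarrow> nat \<Rightarrow> gpoly" where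
  "gkp_row_poly \<alpha> \<beta> \<gamma> \<alpha>' \<beta>' \<gamma>' n =
     (\<Sum>k\<le>n. Poly_Mapping.single
        (\<gamma> + of_nat n * \<alpha> + of_nat k * \<beta>, \<gamma>' + of_nat n * \<alpha>' + of_nat k * \<beta>')
        (gkp \<alpha> \<beta> \<gamma> \<alpha>' \<beta>' \<gamma>' n k))"

lemma gkp_row_poly_0: "gkp_row_poly \<alpha> \<beta> \<gamma> \<alpha>' \<beta>' \<gamma>' 0 = xy \<gamma> \<gamma>'"
  by (simp add: gkp_row_poly_def xy_def)

lemma gkp_row_poly_eq:
  "gkp_row_poly \<alpha> \<beta> \<gamma> \<alpha>' \<beta>' \<gamma>' n =
     xy \<gamma> \<gamma>' * xy \<alpha> \<alpha>' ^ n * (\<Sum>k = 0..n. cst (gkp \<alpha> \<beta> \<gamma> \<alpha>' \<beta>' \<gamma>' n k) * xy \<beta> \<beta>' ^ k)"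
  unfolding gkp_row_poly_def atLeast0AtMost sum_distrib_left
proof (rule sum.cong)
  fix k
  have "xy \<gamma> \<gamma>' * xy \<alpha> \<alpha>' ^ n * (cst (gkp \<alpha> \<beta> \<gamma> \<alpha>' \<beta>' \<gamma>' n k) * xy \<beta> \<beta>' ^ k) =
      cst (gkp \<alpha> \<beta> \<gamma> \<alpha>' \<beta>' \<gamma>' n k) * (xy \<gamma> \<gamma>' * xy \<alpha> \<alpha>' ^ n * xy \<beta> \<beta>' ^ k)"
    by (simp only: ac_simps)
  then show "Poly_Mapping.single
        (\<gamma> + of_nat n * \<alpha> + of_nat k * \<beta>, \<gamma>' + of_nat n * \<alpha>' + of_nat k * \<beta>')
        (gkp \<alpha> \<beta> \<gamma> \<alpha>' \<beta>' \<gamma>' n k) =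
      xy \<gamma> \<gamma>' * xy \<alpha> \<alpha>' ^ n * (cst (gkp \<alpha> \<beta> \<gamma> \<alpha>' \<beta>' \<gamma>' n k) * xy \<beta> \<beta>' ^ k)"
    by (simp add: xy_power xy_mult cst_mult_xy)
qed simp

lemma D_single_if_monomial_rule:
  fixes D :: "gpoly \<Rightarrow> gpoly"
  assumes scal: "\<And>c f. D (cst c * f) = cst c * D f"
    and mono_rule: "\<And>l m. D (xy l m) =
        xy l m * (cst l * xy (-1) 0 * D (xy 1 0) + cst m * xy 0 (-1) * D (xy 0 1))"
    and Dx: "D (xy 1 0) = xy (1 + \<alpha>) \<alpha>'"
    and Dy: "D (xy 0 1) = xy (\<alpha> + \<beta>) (1 + \<alpha>' + \<beta>')"
  shows "D (Poly_Mapping.single (a, b) c) =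
    Poly_Mapping.single (a + \<alpha>, b + \<alpha>') (c * a) +
    Poly_Mapping.single (a + \<alpha> + \<beta>, b + \<alpha>' + \<beta>') (c * b)"
proof -
  have "D (Poly_Mapping.single (a, b) c) = cst c * D (xy a b)"
    by (simp add: scal flip: cst_mult_xy)
  also have "\<dots> = cst (c * a) * xy (a + \<alpha>) (b + \<alpha>') + cst (c * b) * xy (a + \<alpha> + \<beta>) (b + \<alpha>' + \<beta>')"
    unfolding mono_rule[of a b] Dx Dy unfolding cst_def xy_def
    by (simp only: distrib_left mult.assoc[symmetric] mult_single) (simp add: algebra_simps)
  finally show ?thesis
    by (simp add: cst_mult_xy)
qed

context
  fixes D :: "gpoly \<Rightarrow> gpoly" and \<alpha> \<beta> \<alpha>' \<beta>' :: complex
  assumes additive: "additive D"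
    and D_single: "\<And>a b c. D (Poly_Mapping.single (a, b) c) =
      Poly_Mapping.single (a + \<alpha>, b + \<alpha>') (c * a) +
      Poly_Mapping.single (a + \<alpha> + \<beta>, b + \<alpha>' + \<beta>') (c * b)"
begin

lemma D_gkp_row_poly:
  "D (gkp_row_poly \<alpha> \<beta> \<gamma> \<alpha>' \<beta>' \<gamma>' n) = gkp_row_poly \<alpha> \<beta> \<gamma> \<alpha>' \<beta>' \<gamma>' (Suc n)"
proof -
  define T where "T = gkp \<alpha> \<beta> \<gamma> \<alpha>' \<beta>' \<gamma>'"
  define P :: "nat \<Rightarrow> nat \<Rightarrow> complex \<Rightarrow> gpoly" where "P m k = Poly_Mapping.single
      (\<gamma> + of_nat m * \<alpha> + of_nat k * \<beta>, \<gamma>' + of_nat m * \<alpha>' + of_nat k * \<beta>')" for m k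
  define u where "u k = T n k * (\<gamma> + of_nat n * \<alpha> + of_nat k * \<beta>)" for k
  define v where "v k = T n k * (\<gamma>' + of_nat n * \<alpha>' + of_nat k * \<beta>')" for k
  have row: "gkp_row_poly \<alpha> \<beta> \<gamma> \<alpha>' \<beta>' \<gamma>' m = (\<Sum>k\<le>m. P m k (T m k))" for m
    by (simp add: gkp_row_poly_def P_def T_def)
  have "D (gkp_row_poly \<alpha> \<beta> \<gamma> \<alpha>' \<beta>' \<gamma>' n) =
      (\<Sum>k\<le>n. P (Suc n) k (u k)) + (\<Sum>k\<le>n. P (Suc n) (Suc k) (v k))"
    unfolding row additive.sum[OF additive] P_def D_single u_def v_def
    by (simp add: sum.distrib algebra_simps)
  also have "(\<Sum>k\<le>n. P (Suc n) k (u k)) = (\<Sum>k\<le>Suc n. P (Suc n) k (u k))"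
    by (simp add: u_def T_def gkp_eq_0_above_diagonal P_def)
  also have "\<dots> = P (Suc n) 0 (u 0) + (\<Sum>k\<le>n. P (Suc n) (Suc k) (u (Suc k)))"
    by (rule sum.atMost_Suc_shift)
  also have "P (Suc n) 0 (u 0) + (\<Sum>k\<le>n. P (Suc n) (Suc k) (u (Suc k))) +
      (\<Sum>k\<le>n. P (Suc n) (Suc k) (v k)) =
      P (Suc n) 0 (T (Suc n) 0) + (\<Sum>k\<le>n. P (Suc n) (Suc k) (T (Suc n) (Suc k)))"
    by (simp add: u_def v_def T_def P_def add.assoc algebra_simps
        flip: sum.distrib single_add)
  also have "\<dots> = gkp_row_poly \<alpha> \<beta> \<gamma> \<alpha>' \<beta>' \<gamma>' (Suc n)"
    unfolding row by (rule sum.atMost_Suc_shift[symmetric])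
  finally show ?thesis .
qed

lemma funpow_D_xy: "(D ^^ n) (xy \<gamma> \<gamma>') = gkp_row_poly \<alpha> \<beta> \<gamma> \<alpha>' \<beta>' \<gamma>' n"
  by (induction n) (simp_all add: gkp_row_poly_0 D_gkp_row_poly)

end

theorem mainTheorem19:
  fixes D :: "gpoly \<Rightarrow> gpoly"
    and \<alpha> \<beta> \<alpha>' \<beta>' :: complex
  assumes add: "\<And>f g. D (f + g) = D f + D g"
    and scal: "\<And>c f. D (cst c * f) = cst c * D f"
    and leibniz: "\<And>f g. D (f * g) = D f * g + f * D g"
    and mono_rule: "\<And>l m. D (xy l m) =
        xy l m * (cst l * xy (-1) 0 * D (xy 1 0) + cst m * xy 0 (-1) * D (xy 0 1))"
    and Dx: "D (xy 1 0) = xy (1 + \<alpha>) \<alpha>'"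
    and Dy: "D (xy 0 1) = xy (\<alpha> + \<beta>) (1 + \<alpha>' + \<beta>')"
  shows "\<forall>n::nat. \<forall>\<gamma> \<gamma>' :: complex.
    (D ^^ n) (xy \<gamma> \<gamma>') =
      xy \<gamma> \<gamma>' * (xy \<alpha> \<alpha>') ^ n *
      (\<Sum>k = 0..n. cst (gkp \<alpha> \<beta> \<gamma> \<alpha>' \<beta>' \<gamma>' n k) * (xy \<beta> \<beta>') ^ k)"
proof (intro allI)
  fix n :: nat and \<gamma> \<gamma>' :: complex
  have "additive D"
    by unfold_locales (rule add)
  moreover note D_single_if_monomial_rule[of D, OF scal mono_rule Dx Dy]
  ultimately have "(D ^^ n) (xy \<gamma> \<gamma>') = gkp_row_poly \<alpha> \<beta> \<gamma> \<alpha>' \<beta>' \<gamma>' n"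
    by (rule funpow_D_xy)
  then show "(D ^^ n) (xy \<gamma> \<gamma>') =
      xy \<gamma> \<gamma>' * (xy \<alpha> \<alpha>') ^ n *
      (\<Sum>k = 0..n. cst (gkp \<alpha> \<beta> \<gamma> \<alpha>' \<beta>' \<gamma>' n k) * (xy \<beta> \<beta>') ^ k)"
    by (simp only: gkp_row_poly_eq)
qed

end
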